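(* For all $t>0$, the limit $$P'_{*,-}(t):=\lim_{s\uparrow t}\frac{P_*(t)-P_*(s)}{t-s}$$ exists and belongs to $[-\tau_{\max},-\tau_{\min}]$.
   Context: Setting: $Q=\mathbb{T}^2\setminus\bigcup_i\mathcal{O}_i$ is a Sinai billiard table (finitely many pairwise disjoint convex closed domains $\mathcal{O}_i$ in the two-torus with $C^3$ boundaries of strictly positive curvature) with finite horizon (no trajectory makes only tangential collisions). $T:M\to M$, $M=\partial Q\times[-\pi/2,\pi/2]$ (coordinates $(r,\varphi)$), is the billiard map, $\tau(x)$ the free flight time from $x$ to $T(x)$, $\tau_{\min}=\inf\tau>0$, $\tau_{\max}=\sup\tau<\infty$, $\Sigma_n\tau=\sum_{k=0}^{n-1}\tau\circ T^k$. $\mathcal{S}_0=\{\varphi=\pm\pi/2\}$ and for $n\ge1$, $\mathcal{S}_n=\bigcup_{i=-n}^{0}T^i\mathcal{S}_0$; $\mathcal{M}_0^n$ is the set of maximal connected components of $M\setminus\mathcal{S}_n$. For $t\ge0$, $Q_n(t)=\sum_{A\in\mathcal{M}_0^n}\sup_Ae^{-t\Sigma_n\tau}$ and $P_*(t)=\lim_{n\to\infty}\frac1n\log Q_n(t)$ (the limit exists and $t\mapsto P_*(t)$ is convex). *)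

theory Defs
  imports "HOL-Analysis.Analysis"
begin

text \<open>Abstract rendering of the billiard objects. M is the phase space, T the
billiard map, tau the free flight time, S0 the set {phi = +-pi/2}.\<close>

text \<open>S_n = union over i = -n..0 of T^i S_0, i.e. the points x with T^k x in S_0 for some 0 <= k <= n.\<close>
definition sing_set :: "('a \<Rightarrow> 'a) \<Rightarrow> 'a set \<Rightarrow> 'a set \<Rightarrow> nat \<Rightarrow> 'a set" where
  "sing_set T M S0 n = (\<Union>k\<in>{0..n}. {x \<in> M. (T ^^ k) x \<in> S0})"

definition cells :: "('a \<Rightarrow> 'a) \<Rightarrow> 'a::topological_space set \<Rightarrow> 'a set \<Rightarrow> nat \<Rightarrow> 'a set set" where
  "cells T M S0 n = components (M - sing_set T M S0 n)"

definition birkhoff_sum :: "('a \<Rightarrow> 'a) \<Rightarrow> ('a \<Rightarrow> real) \<Rightarrow> nat \<Rightarrow> 'a \<Rightarrow> real" where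
  "birkhoff_sum T tau n x = (\<Sum>k<n. tau ((T ^^ k) x))"

definition Qn :: "('a \<Rightarrow> 'a) \<Rightarrow> ('a \<Rightarrow> real) \<Rightarrow> 'a::topological_space set \<Rightarrow> 'a set \<Rightarrow> nat \<Rightarrow> real \<Rightarrow> real" where
  "Qn T tau M S0 n t = (\<Sum>A\<in>cells T M S0 n. (SUP x\<in>A. exp (- t * birkhoff_sum T tau n x)))"

definition Pstar :: "('a \<Rightarrow> 'a) \<Rightarrow> ('a \<Rightarrow> real) \<Rightarrow> 'a::topological_space set \<Rightarrow> 'a set \<Rightarrow> real \<Rightarrow> real" where
  "Pstar T tau M S0 t = lim (\<lambda>n. ln (Qn T tau M S0 n t) / real n)"

end

theory Submission
  imports Defs
begin

text \<open>Since \<open>n \<cdot> \<tau>_min \<le> \<Sigma>_n \<tau> \<le> n \<cdot> \<tau>_max\<close>, raising the parameter from \<open>s\<close> to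
  \<open>t\<close> multiplies every supremum in \<open>Q_n\<close> by a factor between \<open>exp (-(t - s) n \<tau>_max)\<close> and
  \<open>exp (-(t - s) n \<tau>_min)\<close>; taking logarithms, dividing by \<open>n\<close> and letting \<open>n \<rightarrow> \<infinity>\<close>,
  every difference quotient of \<open>P_*\<close> lies in \<open>[-\<tau>_max, -\<tau>_min]\<close>. By Hoelder's inequality
  each \<open>log Q_n\<close> is convex, hence so is \<open>P_*\<close>, and the left difference quotients of a convex
  function increase as \<open>s \<uparrow> t\<close>; being bounded, they converge.\<close>

definition partition_sum :: "'a set set \<Rightarrow> ('a \<Rightarrow> real) \<Rightarrow> real \<Rightarrow> real" where
  "partition_sum \<A> S s = (\<Sum>A\<in>\<A>. SUP x\<in>A. exp (- s * S x))"

lemma bdd_above_exp_neg_mult: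
  fixes S :: "'a \<Rightarrow> real"
  assumes "\<And>x. x \<in> A \<Longrightarrow> lo \<le> S x" and "0 \<le> s"
  shows "bdd_above ((\<lambda>x. exp (- s * S x)) ` A)"
proof (rule bdd_aboveI2)
  fix x assume "x \<in> A"
  then show "exp (- s * S x) \<le> exp (- s * lo)"
    using assms by (simp add: mult_left_mono)
qed

lemma SUP_exp_pos:
  fixes S :: "'a \<Rightarrow> real"
  assumes "A \<noteq> {}" and "\<And>x. x \<in> A \<Longrightarrow> lo \<le> S x" and "0 \<le> s"
  shows "0 < (SUP x\<in>A. exp (- s * S x))"
proof -
  obtain x where x: "x \<in> A"
    using assms(1) by blast
  have "0 < exp (- s * S x)"
    by simp
  also have "\<dots> \<le> (SUP x\<in>A. exp (- s * S x))"
    using cSUP_upper[OF x bdd_above_exp_neg_mult] assms by blast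
  finally show ?thesis .
qed

lemma SUP_exp_shift_bounds:
  fixes S :: "'a \<Rightarrow> real"
  assumes ne: "A \<noteq> {}" and bnd: "\<And>x. x \<in> A \<Longrightarrow> lo \<le> S x \<and> S x \<le> hi"
    and st: "0 \<le> s" "s \<le> t"
  shows "exp (- (t - s) * hi) * (SUP x\<in>A. exp (- s * S x)) \<le> (SUP x\<in>A. exp (- t * S x))"
    and "(SUP x\<in>A. exp (- t * S x)) \<le> exp (- (t - s) * lo) * (SUP x\<in>A. exp (- s * S x))"
proof -
  have bdd_s: "bdd_above ((\<lambda>x. exp (- s * S x)) ` A)"
    and bdd_t: "bdd_above ((\<lambda>x. exp (- t * S x)) ` A)"
    using bdd_above_exp_neg_mult[of A lo S] bnd st by auto
  have split: "exp (- t * S x) = exp (- (t - s) * S x) * exp (- s * S x)" for x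
    by (simp flip: exp_add add: algebra_simps)
  have "exp (- s * S x) \<le> (SUP x\<in>A. exp (- t * S x)) / exp (- (t - s) * hi)" if x: "x \<in> A" for x
  proof -
    have "- (t - s) * hi \<le> - (t - s) * S x"
      using bnd[OF x] st by (intro mult_left_mono_neg) auto
    then have "exp (- (t - s) * hi) * exp (- s * S x) \<le> exp (- t * S x)"
      unfolding split by (intro mult_right_mono) auto
    also have "\<dots> \<le> (SUP x\<in>A. exp (- t * S x))"
      by (rule cSUP_upper[OF x bdd_t])
    finally show ?thesis by (simp add: field_simps)
  qed
  then have "(SUP x\<in>A. exp (- s * S x)) \<le> (SUP x\<in>A. exp (- t * S x)) / exp (- (t - s) * hi)"
    by (rule cSUP_least[OF ne])
  then show "exp (- (t - s) * hi) * (SUP x\<in>A. exp (- s * S x)) \<le> (SUP x\<in>A. exp (- t * S x))"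
    by (simp add: field_simps)
  show "(SUP x\<in>A. exp (- t * S x)) \<le> exp (- (t - s) * lo) * (SUP x\<in>A. exp (- s * S x))"
  proof (rule cSUP_least[OF ne])
    fix x assume x: "x \<in> A"
    have "- (t - s) * S x \<le> - (t - s) * lo"
      using bnd[OF x] st by (intro mult_left_mono_neg) auto
    then have "exp (- t * S x) \<le> exp (- (t - s) * lo) * exp (- s * S x)"
      unfolding split by (intro mult_right_mono) auto
    also have "\<dots> \<le> exp (- (t - s) * lo) * (SUP x\<in>A. exp (- s * S x))"
      by (intro mult_left_mono cSUP_upper[OF x bdd_s]) auto
    finally show "exp (- t * S x) \<le> \<dots>" .
  qed
qed

lemma SUP_exp_convex_comb_le:
  fixes S :: "'a \<Rightarrow> real"
  assumes ne: "A \<noteq> {}" and bnd: "\<And>x. x \<in> A \<Longrightarrow> lo \<le> S x"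
    and su: "0 \<le> s" "0 \<le> u" and w: "0 \<le> w" "w \<le> 1"
  shows "(SUP x\<in>A. exp (- (w * s + (1 - w) * u) * S x))
    \<le> (SUP x\<in>A. exp (- s * S x)) powr w * (SUP x\<in>A. exp (- u * S x)) powr (1 - w)"
proof (rule cSUP_least[OF ne])
  fix x assume x: "x \<in> A"
  have bdd_s: "bdd_above ((\<lambda>x. exp (- s * S x)) ` A)"
    and bdd_u: "bdd_above ((\<lambda>x. exp (- u * S x)) ` A)"
    using bdd_above_exp_neg_mult[of A lo S] bnd su by auto
  have "exp (- (w * s + (1 - w) * u) * S x) = exp (- s * S x) powr w * exp (- u * S x) powr (1 - w)"
    by (simp add: powr_def flip: exp_add add: algebra_simps)
  also have "\<dots> \<le> (SUP x\<in>A. exp (- s * S x)) powr w * (SUP x\<in>A. exp (- u * S x)) powr (1 - w)"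
    using w by (intro mult_mono powr_mono2 cSUP_upper[OF x bdd_s] cSUP_upper[OF x bdd_u]) auto
  finally show "exp (- (w * s + (1 - w) * u) * S x) \<le> \<dots>" .
qed

lemma Holder_sum_powr:
  fixes x y :: "'b \<Rightarrow> real"
  assumes fin: "finite I" "I \<noteq> {}" and pos: "\<And>i. i \<in> I \<Longrightarrow> 0 < x i \<and> 0 < y i"
    and w: "0 \<le> w" "w \<le> 1"
  shows "(\<Sum>i\<in>I. x i powr w * y i powr (1 - w)) \<le> (\<Sum>i\<in>I. x i) powr w * (\<Sum>i\<in>I. y i) powr (1 - w)"
proof -
  define X where "X = (\<Sum>i\<in>I. x i)"
  define Y where "Y = (\<Sum>i\<in>I. y i)"
  have X: "0 < X" and Y: "0 < Y"
    unfolding X_def Y_def using fin pos by (auto intro: sum_pos)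
  have "(\<Sum>i\<in>I. x i powr w * y i powr (1 - w)) / (X powr w * Y powr (1 - w))
      = (\<Sum>i\<in>I. (x i / X) powr w * (y i / Y) powr (1 - w))"
    using X Y pos by (simp add: sum_divide_distrib powr_divide)
  also have "\<dots> \<le> (\<Sum>i\<in>I. w * (x i / X) + (1 - w) * (y i / Y))"
    using pos X Y w by (intro sum_mono Youngs_inequality_0) auto
  also have "\<dots> = w * ((\<Sum>i\<in>I. x i) / X) + (1 - w) * ((\<Sum>i\<in>I. y i) / Y)"
    by (simp add: sum.distrib sum_distrib_left sum_divide_distrib)
  also have "\<dots> = 1"
    using X Y unfolding X_def Y_def by simp
  finally show ?thesis
    using X Y unfolding X_def Y_def by (simp add: divide_le_eq)
qed

lemma partition_sum_pos:
  assumes "finite \<A>" "\<A> \<noteq> {}" "{} \<notin> \<A>" and "\<And>x. x \<in> \<Union>\<A> \<Longrightarrow> lo \<le> S x" and "0 \<le> s"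
  shows "0 < partition_sum \<A> S s"
  unfolding partition_sum_def using assms
  by (intro sum_pos SUP_exp_pos[where lo = lo]) auto

lemma ln_partition_sum_diff_bounds:
  assumes fam: "finite \<A>" "\<A> \<noteq> {}" "{} \<notin> \<A>"
    and bnd: "\<And>x. x \<in> \<Union>\<A> \<Longrightarrow> lo \<le> S x \<and> S x \<le> hi" and st: "0 \<le> s" "s \<le> t"
  shows "- (t - s) * hi \<le> ln (partition_sum \<A> S t) - ln (partition_sum \<A> S s)"
    and "ln (partition_sum \<A> S t) - ln (partition_sum \<A> S s) \<le> - (t - s) * lo"
proof -
  let ?Z = "partition_sum \<A> S"
  have Z_pos: "0 < ?Z s" "0 < ?Z t"
    using partition_sum_pos[OF fam, of lo S] bnd st by auto
  have "exp (- (t - s) * hi) * ?Z s \<le> ?Z t"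
    unfolding partition_sum_def sum_distrib_left
    using fam bnd st by (intro sum_mono SUP_exp_shift_bounds(1)[where lo = lo]) auto
  then have "ln (exp (- (t - s) * hi) * ?Z s) \<le> ln (?Z t)"
    using Z_pos by (subst ln_le_cancel_iff) auto
  then show "- (t - s) * hi \<le> ln (?Z t) - ln (?Z s)"
    using Z_pos by (simp add: ln_mult)
  have "?Z t \<le> exp (- (t - s) * lo) * ?Z s"
    unfolding partition_sum_def sum_distrib_left
    using fam bnd st by (intro sum_mono SUP_exp_shift_bounds(2)[where hi = hi]) auto
  then have "ln (?Z t) \<le> ln (exp (- (t - s) * lo) * ?Z s)"
    using Z_pos by (subst ln_le_cancel_iff) auto
  then show "ln (?Z t) - ln (?Z s) \<le> - (t - s) * lo"
    using Z_pos by (simp add: ln_mult)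
qed

lemma partition_sum_log_convex:
  assumes fam: "finite \<A>" "\<A> \<noteq> {}" "{} \<notin> \<A>" and bnd: "\<And>x. x \<in> \<Union>\<A> \<Longrightarrow> lo \<le> S x"
  shows "convex_on {0..} (\<lambda>s. ln (partition_sum \<A> S s))"
proof (rule convex_onI)
  fix w s u :: real
  assume w: "0 < w" "w < 1" and su: "s \<in> {0..}" "u \<in> {0..}"
  let ?Z = "partition_sum \<A> S" and ?m = "(1 - w) * s + (1 - (1 - w)) * u"
  have Z_pos: "0 < ?Z s" "0 < ?Z u" "0 < ?Z ?m"
    using partition_sum_pos[OF fam, of lo S] bnd su w by auto
  have SUP_pos: "0 < (SUP x\<in>A. exp (- r * S x))" if "A \<in> \<A>" "0 \<le> r" for A r
    using SUP_exp_pos[of A lo S r] fam bnd that by blast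
  have "?Z ?m \<le> (\<Sum>A\<in>\<A>. (SUP x\<in>A. exp (- s * S x)) powr (1 - w)
                           * (SUP x\<in>A. exp (- u * S x)) powr (1 - (1 - w)))"
    unfolding partition_sum_def
    using fam bnd su w by (intro sum_mono SUP_exp_convex_comb_le[where lo = lo]) auto
  also have "\<dots> \<le> ?Z s powr (1 - w) * ?Z u powr (1 - (1 - w))"
    unfolding partition_sum_def
    using fam su w SUP_pos by (intro Holder_sum_powr) auto
  finally have "ln (?Z ?m) \<le> ln (?Z s powr (1 - w) * ?Z u powr (1 - (1 - w)))"
    using Z_pos by (subst ln_le_cancel_iff) auto
  then show "ln (?Z ((1 - w) *\<^sub>R s + w *\<^sub>R u)) \<le> (1 - w) * ln (?Z s) + w * ln (?Z u)"
    using Z_pos by (simp add: ln_mult)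
qed simp

lemma convex_on_tendsto:
  fixes f :: "nat \<Rightarrow> 'a::real_vector \<Rightarrow> real"
  assumes cvx: "\<And>n. convex_on C (f n)" and lim: "\<And>x. x \<in> C \<Longrightarrow> (\<lambda>n. f n x) \<longlonglongrightarrow> g x"
  shows "convex_on C g"
proof (rule convex_onI)
  show "convex C"
    using cvx[of 0] by (simp add: convex_on_def)
  fix w :: real and x y assume w: "0 < w" "w < 1" and xy: "x \<in> C" "y \<in> C"
  then have mem: "(1 - w) *\<^sub>R x + w *\<^sub>R y \<in> C"
    using \<open>convex C\<close> by (simp add: convexD)
  have le: "f n ((1 - w) *\<^sub>R x + w *\<^sub>R y) \<le> (1 - w) * f n x + w * f n y" for n
    using cvx w xy by (intro convex_onD) auto
  have rhs: "(\<lambda>n. (1 - w) * f n x + w * f n y) \<longlonglongrightarrow> (1 - w) * g x + w * g y"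
    using lim xy by (intro tendsto_intros) auto
  show "g ((1 - w) *\<^sub>R x + w *\<^sub>R y) \<le> (1 - w) * g x + w * g y"
    by (rule tendsto_le[OF _ rhs lim[OF mem]]) (use le in auto)
qed

lemma convex_on_left_slope_tendsto:
  fixes f :: "real \<Rightarrow> real"
  assumes cvx: "convex_on {a<..} f" and "a < t"
  shows "((\<lambda>s. (f t - f s) / (t - s)) \<longlongrightarrow> (SUP s\<in>{..<t} \<inter> {a<..}. (f t - f s) / (t - s))) (at_left t)"
proof -
  let ?slope = "\<lambda>s. (f t - f s) / (t - s)"
  have swap: "?slope s = (f s - f t) / (s - t)" for s
    by (metis minus_diff_eq minus_divide_divide)
  have mono: "?slope r \<le> ?slope s" if "r \<in> {a<..}" "s \<in> {a<..}" "s < t" "r \<le> s" for r s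
  proof (cases "r = s")
    case False
    with that convex_on_slope_le(2)[OF cvx, of r t s] \<open>a < t\<close> show ?thesis
      unfolding swap by simp
  qed simp
  have bdd: "?slope s \<le> f (t + 1) - f t" if "s \<in> {a<..}" "s < t" for s
  proof -
    have "(f s - f t) / (s - t) \<le> (f t - f (t + 1)) / (t - (t + 1))"
      using convex_on_slope_le[OF cvx, of s "t + 1" t] that \<open>a < t\<close> by force
    then show ?thesis
      unfolding swap by simp
  qed
  have "(?slope \<longlongrightarrow> (SUP s\<in>{..<t} \<inter> {a<..}. ?slope s)) (at t within {..<t} \<inter> {a<..})"
    by (rule Lim_left_bound) (use mono bdd in auto)
  moreover have "at t within {..<t} \<inter> {a<..} = at_left t"
    by (rule at_within_nhd[of t "{a<..}"]) (use \<open>a < t\<close> in auto)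
  ultimately show ?thesis
    by simp
qed

lemma birkhoff_sum_bounds:
  assumes "T ` M \<subseteq> M" "bdd_below (tau ` M)" "bdd_above (tau ` M)" "x \<in> M"
  shows "real n * Inf (tau ` M) \<le> birkhoff_sum T tau n x"
    and "birkhoff_sum T tau n x \<le> real n * Sup (tau ` M)"
proof -
  have orbit: "(T ^^ k) x \<in> M" for k
    using assms(1,4) by (induction k) auto
  have "Inf (tau ` M) \<le> tau ((T ^^ k) x)" "tau ((T ^^ k) x) \<le> Sup (tau ` M)" for k
    using orbit assms(2,3) by (auto intro: cInf_lower cSup_upper)
  then show "real n * Inf (tau ` M) \<le> birkhoff_sum T tau n x"
    and "birkhoff_sum T tau n x \<le> real n * Sup (tau ` M)"
    unfolding birkhoff_sum_def
    using sum_bounded_below[of "{..<n}" "Inf (tau ` M)" "\<lambda>k. tau ((T ^^ k) x)"]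
      sum_bounded_above[of "{..<n}" "\<lambda>k. tau ((T ^^ k) x)" "Sup (tau ` M)"] by auto
qed

lemma Union_cells_subset: "\<Union>(cells T M S0 n) \<subseteq> M"
  unfolding cells_def by (simp add: Union_components)

lemma empty_notin_cells: "{} \<notin> cells T M S0 n"
  unfolding cells_def using in_components_nonempty by blast

lemma Qn_eq_partition_sum: "Qn T tau M S0 n = partition_sum (cells T M S0 n) (birkhoff_sum T tau n)"
  by (simp add: fun_eq_iff Qn_def partition_sum_def)

locale billiard_pressure =
  fixes M :: "'a::topological_space set" and T :: "'a \<Rightarrow> 'a" and tau :: "'a \<Rightarrow> real" and S0 :: "'a set"
  assumes maps_to: "T ` M \<subseteq> M"
    and tau_bdd_below: "bdd_below (tau ` M)" and tau_bdd_above: "bdd_above (tau ` M)"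
    and finite_cells: "\<And>n. finite (cells T M S0 n)"
    and cells_nonempty: "\<And>n. cells T M S0 n \<noteq> {}"
    and pressure_convergent: "\<And>s. 0 \<le> s \<Longrightarrow> convergent (\<lambda>n. ln (Qn T tau M S0 n s) / real n)"
begin

abbreviation "tau_min \<equiv> Inf (tau ` M)"
abbreviation "tau_max \<equiv> Sup (tau ` M)"
abbreviation "P \<equiv> Pstar T tau M S0"

lemma birkhoff_sum_bounds_on_cells:
  assumes "x \<in> \<Union>(cells T M S0 n)"
  shows "real n * tau_min \<le> birkhoff_sum T tau n x \<and> birkhoff_sum T tau n x \<le> real n * tau_max"
proof -
  have "x \<in> M"
    using assms Union_cells_subset by blast
  then show ?thesis
    using birkhoff_sum_bounds[OF maps_to tau_bdd_below tau_bdd_above] by simp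
qed

lemma Pstar_LIMSEQ: "0 \<le> s \<Longrightarrow> (\<lambda>n. ln (Qn T tau M S0 n s) / real n) \<longlonglongrightarrow> P s"
  using pressure_convergent unfolding convergent_LIMSEQ_iff Pstar_def by blast

lemma Pstar_convex: "convex_on {0..} P"
proof (rule convex_on_tendsto[OF _ Pstar_LIMSEQ])
  fix n
  have "convex_on {0..} (\<lambda>s. ln (partition_sum (cells T M S0 n) (birkhoff_sum T tau n) s))"
    by (rule partition_sum_log_convex[OF finite_cells cells_nonempty empty_notin_cells])
      (use birkhoff_sum_bounds_on_cells in blast)
  then show "convex_on {0..} (\<lambda>s. ln (Qn T tau M S0 n s) / real n)"
    unfolding Qn_eq_partition_sum by (rule convex_on_cdiv[rotated]) simp
qed simp

lemma Pstar_diff_bounds: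
  assumes "0 \<le> s" "s \<le> t"
  shows "- (t - s) * tau_max \<le> P t - P s \<and> P t - P s \<le> - (t - s) * tau_min"
proof -
  let ?f = "\<lambda>n s. ln (Qn T tau M S0 n s) / real n"
  have "- (t - s) * tau_max \<le> ?f n t - ?f n s \<and> ?f n t - ?f n s \<le> - (t - s) * tau_min"
    if "1 \<le> n" for n
  proof -
    note bounds = ln_partition_sum_diff_bounds[OF finite_cells cells_nonempty empty_notin_cells,
        where S = "birkhoff_sum T tau n" and lo = "real n * tau_min" and hi = "real n * tau_max",
        OF birkhoff_sum_bounds_on_cells assms]
    let ?D = "ln (Qn T tau M S0 n t) - ln (Qn T tau M S0 n s)"
    have n: "0 < real n"
      using that by simp
    have "?f n t - ?f n s = ?D / real n"
      by (simp add: diff_divide_distrib)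
    moreover have "- (t - s) * tau_max * real n \<le> ?D" "?D \<le> - (t - s) * tau_min * real n"
      using bounds unfolding Qn_eq_partition_sum by (simp_all add: mult_ac)
    ultimately show ?thesis
      using n by (simp add: pos_le_divide_eq pos_divide_le_eq)
  qed
  then have ev: "eventually (\<lambda>n. - (t - s) * tau_max \<le> ?f n t - ?f n s \<and>
                                 ?f n t - ?f n s \<le> - (t - s) * tau_min) sequentially"
    by (rule eventually_sequentiallyI)
  have lim: "(\<lambda>n. ?f n t - ?f n s) \<longlonglongrightarrow> P t - P s"
    using Pstar_LIMSEQ assms by (intro tendsto_diff) auto
  have "- (t - s) * tau_max \<le> P t - P s"
    by (rule tendsto_lowerbound[OF lim]) (use ev in \<open>auto elim: eventually_mono\<close>)
  moreover have "P t - P s \<le> - (t - s) * tau_min"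
    by (rule tendsto_upperbound[OF lim]) (use ev in \<open>auto elim: eventually_mono\<close>)
  ultimately show ?thesis ..
qed

end

theorem lemma3p4:
  fixes M :: "'a::topological_space set" and T :: "'a \<Rightarrow> 'a"
    and tau :: "'a \<Rightarrow> real" and S0 :: "'a set" and t :: real
  assumes "M \<noteq> {}" and "T ` M \<subseteq> M" and "S0 \<subseteq> M"
    and "bdd_below (tau ` M)" and "bdd_above (tau ` M)"
    and "Inf (tau ` M) > 0"
    and "\<And>n. finite (cells T M S0 n)"
    and "\<And>n. cells T M S0 n \<noteq> {}"
    and "\<And>s. s \<ge> 0 \<Longrightarrow> convergent (\<lambda>n. ln (Qn T tau M S0 n s) / real n)"
    and "t > 0"
  shows "\<exists>L. ((\<lambda>s. (Pstar T tau M S0 t - Pstar T tau M S0 s) / (t - s)) \<longlongrightarrow> L) (at_left t)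
             \<and> L \<in> {- Sup (tau ` M) .. - Inf (tau ` M)}"
proof -
  interpret billiard_pressure M T tau S0
    using assms by unfold_locales auto
  let ?slope = "\<lambda>s. (P t - P s) / (t - s)" and ?L = "SUP s\<in>{..<t} \<inter> {0<..}. (P t - P s) / (t - s)"
  have "convex_on {0<..} P"
    by (rule convex_on_subset[OF Pstar_convex]) auto
  then have lim: "(?slope \<longlongrightarrow> ?L) (at_left t)"
    using \<open>t > 0\<close> by (rule convex_on_left_slope_tendsto)
  have slope_bounds: "- tau_max \<le> ?slope s \<and> ?slope s \<le> - tau_min" if "0 < s" "s < t" for s
  proof -
    have "0 < t - s"
      using that by simp
    then show ?thesis
      using Pstar_diff_bounds[of s t] that by (simp add: pos_le_divide_eq pos_divide_le_eq algebra_simps)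
  qed
  have "eventually (\<lambda>s. s \<in> {0<..<t}) (at_left t)"
    using eventually_at_left_real[OF \<open>t > 0\<close>] .
  then have "eventually (\<lambda>s. - tau_max \<le> ?slope s \<and> ?slope s \<le> - tau_min) (at_left t)"
    by eventually_elim (use slope_bounds in auto)
  then have "- tau_max \<le> ?L" "?L \<le> - tau_min"
    by (auto intro: tendsto_lowerbound[OF lim] tendsto_upperbound[OF lim] elim: eventually_mono)
  with lim show ?thesis
    by auto
qed

end
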